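(* Let $(\Gamma,\lambda)$ be a tree plan. The complete $\mathcal{L}_\Gamma$-theory $\mathrm{Th}(\Gamma(\omega))$ is $\aleph_0$-categorical and has quantifier elimination.
   Context: Tree plans: a tree plan is a pair $(\Gamma,\lambda)$ where $\Gamma\subseteq\omega^{<\omega}$ is a finite set of finite sequences containing the empty sequence $\langle\rangle$ and closed under initial segments, and $\lambda:\Gamma\to\{1,\infty\}$ with $\lambda(\langle\rangle)=1$. $\Gamma(\omega)$ is the set of finite sequences $\langle(i_0,t_0),\dots,(i_n,t_n)\rangle$ (including the empty one) such that $\langle i_0,\dots,i_n\rangle\in\Gamma$ and for each $k\le n$: $t_k=\star$ (a fixed symbol not in $\omega$) if $\lambda(\langle i_0,\dots,i_k\rangle)=1$, and $t_k\in\omega$ if $\lambda(\langle i_0,\dots,i_k\rangle)=\infty$. It is a tree under the initial-segment order, viewed as a structure in the language $\mathcal{L}_t$ with $\le$, root constant $\varepsilon$ (the empty sequence), meet $\sqcap$ (longest common initial segment) and $\mathtt{pred}$ (delete the last entry; $\mathtt{pred}(\varepsilon)=\varepsilon$). The map $\pi:\Gamma(\omega)\to\Gamma$ sends $\langle(i_0,t_0),\dots,(i_n,t_n)\rangle$ to $\langle i_0,\dots,i_n\rangle$. The language $\mathcal{L}_\Gamma$ is $\mathcal{L}_t$ together with unary predicates $P_\sigma$ ($\sigma\in\Gamma$), interpreted by $P_\sigma=\pi^{-1}(\sigma)$. *)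

theory Defs
  imports Main "HOL-Library.Sublist" "HOL-Library.Countable_Set"
begin

datatype lab = One | Inf

definition tree_plan :: "nat list set \<Rightarrow> (nat list \<Rightarrow> lab) \<Rightarrow> bool" where
  "tree_plan \<Gamma> lam \<longleftrightarrow> finite \<Gamma> \<and> [] \<in> \<Gamma> \<and>
     (\<forall>s\<in>\<Gamma>. \<forall>k. take k s \<in> \<Gamma>) \<and> lam [] = One"

text \<open>Elements of Gamma(omega): lists of pairs (i_k, t_k); t_k = None encodes the
  symbol star, t_k = Some m encodes m in omega.\<close>

type_synonym elt = "(nat \<times> nat option) list"

definition treeplan_dom :: "nat list set \<Rightarrow> (nat list \<Rightarrow> lab) \<Rightarrow> elt set" where
  "treeplan_dom \<Gamma> lam = {s. map fst s \<in> \<Gamma> \<and>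
     (\<forall>k<length s. (lam (take (Suc k) (map fst s)) = One \<longleftrightarrow> snd (s ! k) = None))}"

datatype trm = Var nat | Eps | Meet trm trm | Pred trm

datatype fm = FF | Eq trm trm | Le trm trm | P "nat list" trm
  | Neg fm | Conj fm fm | Ex nat fm

fun tvars :: "trm \<Rightarrow> nat set" where
  "tvars (Var n) = {n}"
| "tvars Eps = {}"
| "tvars (Meet s t) = tvars s \<union> tvars t"
| "tvars (Pred t) = tvars t"

fun fv :: "fm \<Rightarrow> nat set" where
  "fv FF = {}"
| "fv (Eq s t) = tvars s \<union> tvars t"
| "fv (Le s t) = tvars s \<union> tvars t"
| "fv (P \<sigma> t) = tvars t"
| "fv (Neg \<phi>) = fv \<phi>"
| "fv (Conj \<phi> \<psi>) = fv \<phi> \<union> fv \<psi>"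
| "fv (Ex x \<phi>) = fv \<phi> - {x}"

fun wf_fm :: "nat list set \<Rightarrow> fm \<Rightarrow> bool" where
  "wf_fm \<Gamma> (P \<sigma> t) = (\<sigma> \<in> \<Gamma>)"
| "wf_fm \<Gamma> (Neg \<phi>) = wf_fm \<Gamma> \<phi>"
| "wf_fm \<Gamma> (Conj \<phi> \<psi>) = (wf_fm \<Gamma> \<phi> \<and> wf_fm \<Gamma> \<psi>)"
| "wf_fm \<Gamma> (Ex x \<phi>) = wf_fm \<Gamma> \<phi>"
| "wf_fm \<Gamma> _ = True"

fun qfree :: "fm \<Rightarrow> bool" where
  "qfree (Ex x \<phi>) = False"
| "qfree (Neg \<phi>) = qfree \<phi>"
| "qfree (Conj \<phi> \<psi>) = (qfree \<phi> \<and> qfree \<psi>)"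
| "qfree _ = True"

record 'a lstruct =
  univ :: "'a set"
  eps  :: 'a
  meet :: "'a \<Rightarrow> 'a \<Rightarrow> 'a"
  prd  :: "'a \<Rightarrow> 'a"
  leq  :: "'a \<Rightarrow> 'a \<Rightarrow> bool"
  pr   :: "nat list \<Rightarrow> 'a \<Rightarrow> bool"

definition is_struct :: "'a lstruct \<Rightarrow> bool" where
  "is_struct M \<longleftrightarrow> univ M \<noteq> {} \<and> eps M \<in> univ M \<and>
     (\<forall>x\<in>univ M. \<forall>y\<in>univ M. meet M x y \<in> univ M) \<and>
     (\<forall>x\<in>univ M. prd M x \<in> univ M)"

fun tval :: "'a lstruct \<Rightarrow> (nat \<Rightarrow> 'a) \<Rightarrow> trm \<Rightarrow> 'a" where
  "tval M e (Var n) = e n"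
| "tval M e Eps = eps M"
| "tval M e (Meet s t) = meet M (tval M e s) (tval M e t)"
| "tval M e (Pred t) = prd M (tval M e t)"

fun sat :: "'a lstruct \<Rightarrow> (nat \<Rightarrow> 'a) \<Rightarrow> fm \<Rightarrow> bool" where
  "sat M e FF = False"
| "sat M e (Eq s t) = (tval M e s = tval M e t)"
| "sat M e (Le s t) = leq M (tval M e s) (tval M e t)"
| "sat M e (P \<sigma> t) = pr M \<sigma> (tval M e t)"
| "sat M e (Neg \<phi>) = (\<not> sat M e \<phi>)"
| "sat M e (Conj \<phi> \<psi>) = (sat M e \<phi> \<and> sat M e \<psi>)"
| "sat M e (Ex x \<phi>) = (\<exists>a\<in>univ M. sat M (e(x := a)) \<phi>)"

definition assignment :: "'a lstruct \<Rightarrow> (nat \<Rightarrow> 'a) \<Rightarrow> bool" where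
  "assignment M e \<longleftrightarrow> (\<forall>n. e n \<in> univ M)"

definition treeplan_struct :: "nat list set \<Rightarrow> (nat list \<Rightarrow> lab) \<Rightarrow> elt lstruct" where
  "treeplan_struct \<Gamma> lam = \<lparr> univ = treeplan_dom \<Gamma> lam, eps = [],
      meet = longest_common_prefix, prd = butlast, leq = prefix,
      pr = (\<lambda>\<sigma> x. map fst x = \<sigma>) \<rparr>"

definition Th :: "nat list set \<Rightarrow> 'a lstruct \<Rightarrow> fm set" where
  "Th \<Gamma> M = {\<phi>. wf_fm \<Gamma> \<phi> \<and> fv \<phi> = {} \<and> (\<forall>e. assignment M e \<longrightarrow> sat M e \<phi>)}"

definition is_model :: "nat list set \<Rightarrow> fm set \<Rightarrow> 'a lstruct \<Rightarrow> bool" where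
  "is_model \<Gamma> T M \<longleftrightarrow> is_struct M \<and>
     (\<forall>\<phi>\<in>T. \<forall>e. assignment M e \<longrightarrow> sat M e \<phi>)"

definition L_iso :: "nat list set \<Rightarrow> 'a lstruct \<Rightarrow> 'b lstruct \<Rightarrow> ('a \<Rightarrow> 'b) \<Rightarrow> bool" where
  "L_iso \<Gamma> M N f \<longleftrightarrow> bij_betw f (univ M) (univ N) \<and> f (eps M) = eps N \<and>
     (\<forall>x\<in>univ M. \<forall>y\<in>univ M. f (meet M x y) = meet N (f x) (f y)) \<and>
     (\<forall>x\<in>univ M. f (prd M x) = prd N (f x)) \<and>
     (\<forall>x\<in>univ M. \<forall>y\<in>univ M. leq M x y \<longleftrightarrow> leq N (f x) (f y)) \<and>
     (\<forall>\<sigma>\<in>\<Gamma>. \<forall>x\<in>univ M. pr M \<sigma> x \<longleftrightarrow> pr N \<sigma> (f x))"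

text \<open>aleph_0-categoricity, with the model types given as parameters (type
  variables of the theorem are universally quantified).\<close>
definition aleph0_categorical ::
    "nat list set \<Rightarrow> fm set \<Rightarrow> 'a itself \<Rightarrow> 'b itself \<Rightarrow> bool" where
  "aleph0_categorical \<Gamma> T _ _ \<longleftrightarrow>
     (\<forall>(M::'a lstruct) (N::'b lstruct).
        is_model \<Gamma> T M \<and> countable (univ M) \<and> infinite (univ M) \<and>
        is_model \<Gamma> T N \<and> countable (univ N) \<and> infinite (univ N) \<longrightarrow>
        (\<exists>f. L_iso \<Gamma> M N f))"

text \<open>Quantifier elimination for T = Th(M) (M a model of the complete theory T):
  every L_Gamma formula is T-equivalent to a quantifier-free one in the same free
  variables; since T = Th(M), T proves the universal closure of phi <-> psi iff it holds in M.\<close>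
definition has_QE_Th :: "nat list set \<Rightarrow> 'a lstruct \<Rightarrow> bool" where
  "has_QE_Th \<Gamma> M \<longleftrightarrow>
     (\<forall>\<phi>. wf_fm \<Gamma> \<phi> \<longrightarrow> (\<exists>\<psi>. wf_fm \<Gamma> \<psi> \<and> qfree \<psi> \<and> fv \<psi> \<subseteq> fv \<phi> \<and>
        (\<forall>e. assignment M e \<longrightarrow> (sat M e \<phi> \<longleftrightarrow> sat M e \<psi>))))"

end

theory Submission
  imports Defs
begin

text \<open>
  Any bijection between the children of a node that preserves the index and fixes the symbol
  \<open>\<star>\<close>, chosen independently at every node, induces an automorphism of \<open>\<Gamma>(\<omega>)\<close>.
  Since the tree has bounded height, a finite configuration of nodes is described up to such
  automorphisms by finitely many atoms: which iterated predecessors coincide and which \<open>P\<^sub>\<sigma>\<close>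
  hold. Hence, for every finite set of variables, finitely many quantifier-free formulas decide all
  formulas in these variables. Quantifier elimination follows by writing a formula as the
  disjunction of the atomic diagrams of its solutions. In an arbitrary model of the theory the
  same diagrams still decide all formulas, since this is expressed by sentences of the theory;
  so tuples with equal diagrams in two countable models are elementarily equivalent, and a
  back-and-forth construction yields an isomorphism.
\<close>

lemma tval_agree: "(\<forall>v\<in>tvars t. e v = e' v) \<Longrightarrow> tval M e t = tval M e' t"
  by (induction t) auto

lemma sat_agree: "(\<forall>v\<in>fv \<phi>. e v = e' v) \<Longrightarrow> sat M e \<phi> \<longleftrightarrow> sat M e' \<phi>"
proof (induction \<phi> arbitrary: e e')
  case (Ex x \<phi>)
  then have "sat M (e(x := a)) \<phi> \<longleftrightarrow> sat M (e'(x := a)) \<phi>" for a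
    by (intro Ex.IH) auto
  then show ?case by simp
next
  case (Eq s t)
  then show ?case using tval_agree[of s e e' M] tval_agree[of t e e' M] by simp
next
  case (Le s t)
  then show ?case using tval_agree[of s e e' M] tval_agree[of t e e' M] by simp
next
  case (P \<sigma> t)
  then show ?case using tval_agree[of t e e' M] by simp
next
  case (Conj \<phi> \<psi>)
  then show ?case by (metis UnCI sat.simps(6) fv.simps(6))
qed auto

lemma finite_fv: "finite (fv \<phi>)"
proof -
  have "finite (tvars t)" for t by (induction t) auto
  then show ?thesis by (induction \<phi>) auto
qed

lemma assignment_upd: "assignment M e \<Longrightarrow> a \<in> univ M \<Longrightarrow> assignment M (e(x := a))"
  by (simp add: assignment_def)

lemma tval_in_univ: "is_struct M \<Longrightarrow> assignment M e \<Longrightarrow> tval M e t \<in> univ M"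
  by (induction t) (auto simp: is_struct_def assignment_def)

lemma fv_foldr_Ex: "fv (foldr Ex vs \<phi>) = fv \<phi> - set vs"
  by (induction vs) auto

lemma wf_fm_foldr_Ex: "wf_fm \<Gamma> (foldr Ex vs \<phi>) \<longleftrightarrow> wf_fm \<Gamma> \<phi>"
  by (induction vs) auto

lemma sat_foldr_ExI: "assignment M e \<Longrightarrow> sat M e \<phi> \<Longrightarrow> sat M e (foldr Ex vs \<phi>)"
proof (induction vs)
  case (Cons v vs)
  have "e v \<in> univ M" using Cons.prems(1) by (simp add: assignment_def)
  moreover have "sat M (e(v := e v)) (foldr Ex vs \<phi>)" using Cons by simp
  ultimately show ?case unfolding foldr_Cons o_apply sat.simps(7) by blast
qed simp

lemma sat_foldr_ExE:
  "assignment M e \<Longrightarrow> sat M e (foldr Ex vs \<phi>) \<Longrightarrow> \<exists>e'. assignment M e' \<and> sat M e' \<phi>"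
proof (induction vs arbitrary: e)
  case (Cons v vs)
  then obtain a where a: "a \<in> univ M" "sat M (e(v := a)) (foldr Ex vs \<phi>)" by auto
  have "assignment M (e(v := a))" using Cons.prems(1) a(1) by (rule assignment_upd)
  then show ?case using Cons.IH a(2) by blast
qed auto

definition bigconj :: "fm list \<Rightarrow> fm" where
  "bigconj \<phi>s = foldr Conj \<phi>s (Neg FF)"

definition bigdisj :: "fm list \<Rightarrow> fm" where
  "bigdisj \<phi>s = foldr (\<lambda>\<phi> \<psi>. Neg (Conj (Neg \<phi>) (Neg \<psi>))) \<phi>s FF"

lemma sat_bigdisj: "sat M e (bigdisj \<phi>s) \<longleftrightarrow> (\<exists>\<phi>\<in>set \<phi>s. sat M e \<phi>)"
  and wf_fm_bigconj: "wf_fm \<Gamma> (bigconj \<phi>s) \<longleftrightarrow> (\<forall>\<phi>\<in>set \<phi>s. wf_fm \<Gamma> \<phi>)"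
  and wf_fm_bigdisj: "wf_fm \<Gamma> (bigdisj \<phi>s) \<longleftrightarrow> (\<forall>\<phi>\<in>set \<phi>s. wf_fm \<Gamma> \<phi>)"
  and qfree_bigconj: "qfree (bigconj \<phi>s) \<longleftrightarrow> (\<forall>\<phi>\<in>set \<phi>s. qfree \<phi>)"
  and qfree_bigdisj: "qfree (bigdisj \<phi>s) \<longleftrightarrow> (\<forall>\<phi>\<in>set \<phi>s. qfree \<phi>)"
  and fv_bigconj: "fv (bigconj \<phi>s) = (\<Union>\<phi>\<in>set \<phi>s. fv \<phi>)"
  and fv_bigdisj: "fv (bigdisj \<phi>s) = (\<Union>\<phi>\<in>set \<phi>s. fv \<phi>)"
  by (induction \<phi>s) (auto simp: bigconj_def bigdisj_def)

definition diagram :: "fm list \<Rightarrow> fm set \<Rightarrow> fm" where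
  "diagram L B = bigconj (map (\<lambda>\<alpha>. if \<alpha> \<in> B then \<alpha> else Neg \<alpha>) L)"

lemma sat_diagram: "sat M e (diagram L B) \<longleftrightarrow> (\<forall>\<alpha>\<in>set L. sat M e \<alpha> \<longleftrightarrow> \<alpha> \<in> B)"
  by (induction L) (auto simp: diagram_def bigconj_def)

lemma wf_fm_diagram: "\<forall>\<alpha>\<in>set L. wf_fm \<Gamma> \<alpha> \<Longrightarrow> wf_fm \<Gamma> (diagram L B)"
  and qfree_diagram: "\<forall>\<alpha>\<in>set L. qfree \<alpha> \<Longrightarrow> qfree (diagram L B)"
  and fv_diagram: "fv (diagram L B) = (\<Union>\<alpha>\<in>set L. fv \<alpha>)"
  by (auto simp: diagram_def wf_fm_bigconj qfree_bigconj fv_bigconj)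

lemma L_iso_tval:
  assumes "is_struct M" "L_iso \<Gamma> M N f" "assignment M e"
  shows "tval N (\<lambda>v. f (e v)) t = f (tval M e t)"
  using assms by (induction t) (auto simp: L_iso_def tval_in_univ)

lemma L_iso_sat:
  assumes M: "is_struct M" and f: "L_iso \<Gamma> M N f"
    and "assignment M e" "wf_fm \<Gamma> \<phi>"
  shows "sat N (f \<circ> e) \<phi> \<longleftrightarrow> sat M e \<phi>"
  using assms(3,4)
proof (induction \<phi> arbitrary: e)
  case (Eq s t)
  have "inj_on f (univ M)" using f by (simp add: L_iso_def bij_betw_def)
  then show ?case using Eq L_iso_tval[OF M f] tval_in_univ[OF M] by (simp add: inj_on_eq_iff)
next
  case (Le s t)
  then show ?case using f L_iso_tval[OF M f] tval_in_univ[OF M] by (simp add: L_iso_def)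
next
  case (P \<sigma> t)
  then show ?case using f L_iso_tval[OF M f] tval_in_univ[OF M] by (simp add: L_iso_def)
next
  case (Ex x \<phi>)
  have N: "univ N = f ` univ M" using f by (simp add: L_iso_def bij_betw_def)
  have upd: "sat N ((\<lambda>v. f (e v))(x := f a)) \<phi> \<longleftrightarrow> sat M (e(x := a)) \<phi>" if "a \<in> univ M" for a
  proof -
    have "(\<lambda>v. f (e v))(x := f a) = f \<circ> e(x := a)" by auto
    moreover have "sat N (f \<circ> e(x := a)) \<phi> \<longleftrightarrow> sat M (e(x := a)) \<phi>"
      using Ex.prems that by (intro Ex.IH) (simp_all add: assignment_def)
    ultimately show ?thesis by (simp only:)
  qed
  have "sat N (f \<circ> e) (Ex x \<phi>) \<longleftrightarrow> (\<exists>b\<in>f ` univ M. sat N ((\<lambda>v. f (e v))(x := b)) \<phi>)"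
    by (simp add: N comp_def)
  also have "\<dots> \<longleftrightarrow> sat M e (Ex x \<phi>)" using upd by auto
  finally show ?case .
qed auto

lemma Th_model_sat:
  assumes M: "is_model \<Gamma> (Th \<Gamma> A) M" and wf: "wf_fm \<Gamma> \<phi>"
    and valid: "\<forall>e. assignment A e \<longrightarrow> sat A e \<phi>" and e: "assignment M e"
  shows "sat M e \<phi>"
proof -
  obtain vs where vs: "set vs = fv \<phi>" using finite_fv finite_list by blast
  let ?closure = "Neg (foldr Ex vs (Neg \<phi>))"
  have "?closure \<in> Th \<Gamma> A"
    using wf vs valid by (auto simp: Th_def wf_fm_foldr_Ex fv_foldr_Ex dest: sat_foldr_ExE)
  then have "sat M e ?closure" using M e by (auto simp: is_model_def)
  then show ?thesis using sat_foldr_ExI[OF e, of "Neg \<phi>"] by auto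
qed

lemma Th_model_sat_closed:
  assumes M: "is_model \<Gamma> (Th \<Gamma> A) M" and "wf_fm \<Gamma> \<phi>" "fv \<phi> = {}"
    and e0: "assignment A e0" and e: "assignment M e"
  shows "sat M e \<phi> \<longleftrightarrow> sat A e0 \<phi>"
proof -
  define \<phi>' where "\<phi>' = (if sat A e0 \<phi> then \<phi> else Neg \<phi>)"
  have "sat A e0' \<phi>'" for e0' using sat_agree[of \<phi> e0' e0] \<open>fv \<phi> = {}\<close> by (simp add: \<phi>'_def)
  then have "sat M e \<phi>'" using Th_model_sat[OF M _ _ e] \<open>wf_fm \<Gamma> \<phi>\<close> by (simp add: \<phi>'_def)
  then show ?thesis by (auto simp: \<phi>'_def split: if_splits)
qed

lemma Th_model_satisfiable:
  assumes M: "is_model \<Gamma> (Th \<Gamma> A) M" and "wf_fm \<Gamma> \<phi>" and e: "assignment M e" "sat M e \<phi>"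
  shows "\<exists>e0. assignment A e0 \<and> sat A e0 \<phi>"
  using Th_model_sat[OF M _ _ e(1), of "Neg \<phi>"] assms by auto

section \<open>Finitely many quantifier-free formulas deciding all formulas\<close>

definition qf_determines :: "nat list set \<Rightarrow> 'a lstruct \<Rightarrow> nat set \<Rightarrow> fm list \<Rightarrow> bool" where
  "qf_determines \<Gamma> A V L \<longleftrightarrow> (\<forall>\<alpha>\<in>set L. wf_fm \<Gamma> \<alpha> \<and> qfree \<alpha> \<and> fv \<alpha> \<subseteq> V) \<and>
     (\<forall>e e'. assignment A e \<longrightarrow> assignment A e' \<longrightarrow> (\<forall>\<alpha>\<in>set L. sat A e \<alpha> \<longleftrightarrow> sat A e' \<alpha>) \<longrightarrow>
        (\<forall>\<phi>. wf_fm \<Gamma> \<phi> \<longrightarrow> fv \<phi> \<subseteq> V \<longrightarrow> (sat A e \<phi> \<longleftrightarrow> sat A e' \<phi>)))"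

definition qf_determined :: "nat list set \<Rightarrow> 'a lstruct \<Rightarrow> bool" where
  "qf_determined \<Gamma> A \<longleftrightarrow> (\<forall>V. finite V \<longrightarrow> (\<exists>L. qf_determines \<Gamma> A V L))"

lemma qf_determines_diagram:
  assumes "qf_determines \<Gamma> A V L"
  shows "wf_fm \<Gamma> (diagram L B)" "qfree (diagram L B)" "fv (diagram L B) \<subseteq> V"
  using assms by (auto simp: qf_determines_def wf_fm_diagram qfree_diagram fv_diagram)

lemma qf_determines_sat:
  assumes "qf_determines \<Gamma> A V L" "wf_fm \<Gamma> \<phi>" "fv \<phi> \<subseteq> V"
    and "assignment A e" "sat A e (diagram L B)" "assignment A e'" "sat A e' (diagram L B)"
  shows "sat A e \<phi> \<longleftrightarrow> sat A e' \<phi>"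
proof -
  have "\<forall>\<alpha>\<in>set L. sat A e \<alpha> \<longleftrightarrow> sat A e' \<alpha>" using assms(5,7) by (simp add: sat_diagram)
  then show ?thesis using assms(1-4,6) unfolding qf_determines_def by blast
qed

text \<open>A formula is equivalent to the disjunction of the diagrams of its solutions.\<close>
theorem qf_determined_has_QE_Th:
  assumes "qf_determined \<Gamma> A"
  shows "has_QE_Th \<Gamma> A"
  unfolding has_QE_Th_def
proof (intro allI impI)
  fix \<phi> assume wf: "wf_fm \<Gamma> \<phi>"
  obtain L where L: "qf_determines \<Gamma> A (fv \<phi>) L"
    using assms finite_fv unfolding qf_determined_def by blast
  define Bs where "Bs = {{\<alpha> \<in> set L. sat A e \<alpha>} | e. assignment A e \<and> sat A e \<phi>}"
  have "finite Bs" by (rule finite_subset[of _ "Pow (set L)"]) (auto simp: Bs_def)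
  then obtain Ds where Ds: "set Ds = diagram L ` Bs" using finite_list by (metis finite_imageI)
  show "\<exists>\<psi>. wf_fm \<Gamma> \<psi> \<and> qfree \<psi> \<and> fv \<psi> \<subseteq> fv \<phi> \<and> (\<forall>e. assignment A e \<longrightarrow> sat A e \<phi> = sat A e \<psi>)"
  proof (intro exI[of _ "bigdisj Ds"] conjI allI impI)
    show "wf_fm \<Gamma> (bigdisj Ds)" "qfree (bigdisj Ds)" "fv (bigdisj Ds) \<subseteq> fv \<phi>"
      using qf_determines_diagram[OF L] by (auto simp: Ds wf_fm_bigdisj qfree_bigdisj fv_bigdisj)
    fix e assume e: "assignment A e"
    show "sat A e \<phi> \<longleftrightarrow> sat A e (bigdisj Ds)"
    proof
      assume "sat A e \<phi>"
      then have "{\<alpha> \<in> set L. sat A e \<alpha>} \<in> Bs" using e by (auto simp: Bs_def)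
      moreover have "sat A e (diagram L {\<alpha> \<in> set L. sat A e \<alpha>})" by (simp add: sat_diagram)
      ultimately show "sat A e (bigdisj Ds)" unfolding sat_bigdisj Ds by blast
    next
      assume "sat A e (bigdisj Ds)"
      then obtain e' where e': "assignment A e'" "sat A e' \<phi>"
        and "sat A e (diagram L {\<alpha> \<in> set L. sat A e' \<alpha>})"
        by (auto simp: Ds Bs_def sat_bigdisj)
      moreover have "sat A e' (diagram L {\<alpha> \<in> set L. sat A e' \<alpha>})" by (simp add: sat_diagram)
      ultimately show "sat A e \<phi>" using qf_determines_sat[OF L wf _ e] by blast
    qed
  qed
qed

section \<open>Back and forth between countable models\<close>

lemma qf_determines_Th_model:
  assumes M: "is_model \<Gamma> (Th \<Gamma> A) M" and L: "qf_determines \<Gamma> A V L"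
    and \<phi>: "wf_fm \<Gamma> \<phi>" "fv \<phi> \<subseteq> V"
    and e0: "assignment A e0" "sat A e0 (diagram L B)"
    and e: "assignment M e" "sat M e (diagram L B)"
  shows "sat M e \<phi> \<longleftrightarrow> sat A e0 \<phi>"
proof -
  define \<phi>' where "\<phi>' = (if sat A e0 \<phi> then \<phi> else Neg \<phi>)"
  let ?\<chi> = "Neg (Conj (diagram L B) (Neg \<phi>'))"
  have "wf_fm \<Gamma> ?\<chi>" using qf_determines_diagram[OF L] \<phi>(1) by (simp add: \<phi>'_def)
  moreover have "\<forall>e'. assignment A e' \<longrightarrow> sat A e' ?\<chi>"
    using qf_determines_sat[OF L \<phi> _ _ e0] by (auto simp: \<phi>'_def)
  ultimately have "sat M e ?\<chi>" using Th_model_sat[OF M _ _ e(1)] by blast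
  then show ?thesis using e(2) by (cases "sat A e0 \<phi>") (simp_all add: \<phi>'_def)
qed

text \<open>Variables outside the tuple are sent to the root, an arbitrary default.\<close>
definition tuple_asg :: "'a lstruct \<Rightarrow> 'a list \<Rightarrow> nat \<Rightarrow> 'a" where
  "tuple_asg M xs i = (if i < length xs then xs ! i else eps M)"

lemma assignment_tuple_asg: "is_struct M \<Longrightarrow> set xs \<subseteq> univ M \<Longrightarrow> assignment M (tuple_asg M xs)"
  by (auto simp: assignment_def tuple_asg_def is_struct_def) (metis nth_mem subsetD)

lemma tuple_asg_snoc: "tuple_asg M (xs @ [a]) = (tuple_asg M xs)(length xs := a)"
  by (auto simp: tuple_asg_def fun_eq_iff nth_append)

definition partial_elementary :: "nat list set \<Rightarrow> 'a lstruct \<Rightarrow> 'b lstruct \<Rightarrow> 'a list \<Rightarrow> 'b list \<Rightarrow> bool" where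
  "partial_elementary \<Gamma> M N xs ys \<longleftrightarrow> length xs = length ys \<and> set xs \<subseteq> univ M \<and> set ys \<subseteq> univ N \<and>
     (\<forall>\<phi>. wf_fm \<Gamma> \<phi> \<longrightarrow> fv \<phi> \<subseteq> {..<length xs} \<longrightarrow>
        (sat M (tuple_asg M xs) \<phi> \<longleftrightarrow> sat N (tuple_asg N ys) \<phi>))"

lemma partial_elementary_sym: "partial_elementary \<Gamma> M N xs ys \<Longrightarrow> partial_elementary \<Gamma> N M ys xs"
  unfolding partial_elementary_def by auto

lemma partial_elementary_Nil:
  assumes M: "is_model \<Gamma> (Th \<Gamma> A) M" and N: "is_model \<Gamma> (Th \<Gamma> A) N" and "univ A \<noteq> {}"
  shows "partial_elementary \<Gamma> M N [] []"
proof -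
  obtain a where "a \<in> univ A" using assms(3) by blast
  then have e0: "assignment A (\<lambda>_. a)" by (simp add: assignment_def)
  have "assignment M (tuple_asg M [])" "assignment N (tuple_asg N [])"
    using M N by (auto simp: is_model_def intro: assignment_tuple_asg)
  then have "sat M (tuple_asg M []) \<phi> \<longleftrightarrow> sat N (tuple_asg N []) \<phi>"
    if "wf_fm \<Gamma> \<phi>" "fv \<phi> = {}" for \<phi>
    using Th_model_sat_closed[OF M that e0] Th_model_sat_closed[OF N that e0] by simp
  then show ?thesis by (simp add: partial_elementary_def)
qed

lemma partial_elementary_extend:
  assumes A: "qf_determined \<Gamma> A"
    and M: "is_model \<Gamma> (Th \<Gamma> A) M" and N: "is_model \<Gamma> (Th \<Gamma> A) N"
    and xy: "partial_elementary \<Gamma> M N xs ys" and a: "a \<in> univ M"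
  shows "\<exists>b\<in>univ N. partial_elementary \<Gamma> M N (xs @ [a]) (ys @ [b])"
proof -
  txt \<open>The diagram \<open>\<theta>\<close> of \<open>xs @ [a]\<close> is realised over \<open>ys\<close> in \<open>N\<close>; being realised in the
    structure \<open>A\<close> as well, it decides every formula in both models.\<close>
  define n where "n = length xs"
  obtain L where L: "qf_determines \<Gamma> A {..n} L" using A by (auto simp: qf_determined_def)
  define eM where "eM = tuple_asg M (xs @ [a])"
  define \<theta> where "\<theta> = diagram L {\<alpha> \<in> set L. sat M eM \<alpha>}"
  have eM: "assignment M eM" "sat M eM \<theta>"
    using M xy a by (auto simp: eM_def \<theta>_def sat_diagram is_model_def partial_elementary_def
        intro!: assignment_tuple_asg)
  note \<theta> = qf_determines_diagram[OF L, of "{\<alpha> \<in> set L. sat M eM \<alpha>}", folded \<theta>_def]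
  have "sat M (tuple_asg M xs) (Ex n \<theta>)" using eM a by (auto simp: eM_def tuple_asg_snoc n_def)
  moreover have "fv (Ex n \<theta>) \<subseteq> {..<length xs}" using \<theta>(3) by (auto simp: n_def)
  moreover have "wf_fm \<Gamma> (Ex n \<theta>)" using \<theta>(1) by simp
  ultimately have "sat N (tuple_asg N ys) (Ex n \<theta>)" using xy unfolding partial_elementary_def by blast
  then obtain b where b: "b \<in> univ N" "sat N ((tuple_asg N ys)(n := b)) \<theta>" by auto
  define eN where "eN = tuple_asg N (ys @ [b])"
  have eN: "assignment N eN" "sat N eN \<theta>"
    using N xy b by (auto simp: eN_def is_model_def partial_elementary_def intro!: assignment_tuple_asg,
        simp add: tuple_asg_snoc n_def)
  obtain e0 where e0: "assignment A e0" "sat A e0 \<theta>" using Th_model_satisfiable[OF M \<theta>(1) eM] by blast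
  have "sat M eM \<phi> \<longleftrightarrow> sat N eN \<phi>" if \<phi>: "wf_fm \<Gamma> \<phi>" "fv \<phi> \<subseteq> {..n}" for \<phi>
  proof -
    have "sat M eM \<phi> \<longleftrightarrow> sat A e0 \<phi>"
      using qf_determines_Th_model[OF M L \<phi> e0[unfolded \<theta>_def] eM[unfolded \<theta>_def]] .
    also have "\<dots> \<longleftrightarrow> sat N eN \<phi>"
      using qf_determines_Th_model[OF N L \<phi> e0[unfolded \<theta>_def] eN[unfolded \<theta>_def]] ..
    finally show ?thesis .
  qed
  moreover have "length (xs @ [a]) = length (ys @ [b])" "set (xs @ [a]) \<subseteq> univ M" "set (ys @ [b]) \<subseteq> univ N"
    using xy a b by (auto simp: partial_elementary_def)
  ultimately have "partial_elementary \<Gamma> M N (xs @ [a]) (ys @ [b])"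
    by (simp add: partial_elementary_def eM_def eN_def n_def lessThan_Suc_atMost)
  then show ?thesis using b(1) by blast
qed

primrec back_and_forth :: "nat list set \<Rightarrow> 'a lstruct \<Rightarrow> 'b lstruct \<Rightarrow> nat \<Rightarrow> 'a list \<times> 'b list" where
  "back_and_forth \<Gamma> M N 0 = ([], [])"
| "back_and_forth \<Gamma> M N (Suc k) = (let (xs, ys) = back_and_forth \<Gamma> M N k in
     if even k then (let a = from_nat_into (univ M) (k div 2) in
        (xs @ [a], ys @ [SOME b. b \<in> univ N \<and> partial_elementary \<Gamma> M N (xs @ [a]) (ys @ [b])]))
     else (let b = from_nat_into (univ N) (k div 2) in
        (xs @ [SOME a. a \<in> univ M \<and> partial_elementary \<Gamma> M N (xs @ [a]) (ys @ [b])], ys @ [b])))"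

lemma back_and_forth_Suc:
  "\<exists>a b. back_and_forth \<Gamma> M N (Suc k) =
    (fst (back_and_forth \<Gamma> M N k) @ [a], snd (back_and_forth \<Gamma> M N k) @ [b])"
  by (simp add: Let_def split_beta)

lemma length_back_and_forth:
  "length (fst (back_and_forth \<Gamma> M N k)) = k \<and> length (snd (back_and_forth \<Gamma> M N k)) = k"
proof (induction k)
  case (Suc k)
  then show ?case using back_and_forth_Suc[of \<Gamma> M N k] by auto
qed simp

lemma partial_elementary_back_and_forth:
  assumes A: "qf_determined \<Gamma> A" "univ A \<noteq> {}"
    and M: "is_model \<Gamma> (Th \<Gamma> A) M" and N: "is_model \<Gamma> (Th \<Gamma> A) N"
  shows "partial_elementary \<Gamma> M N (fst (back_and_forth \<Gamma> M N k)) (snd (back_and_forth \<Gamma> M N k))"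
proof (induction k)
  case 0
  then show ?case using partial_elementary_Nil[OF M N A(2)] by simp
next
  case (Suc k)
  obtain xs ys where k: "back_and_forth \<Gamma> M N k = (xs, ys)" by fastforce
  with Suc have xy: "partial_elementary \<Gamma> M N xs ys" by simp
  have "univ M \<noteq> {}" "univ N \<noteq> {}" using M N by (auto simp: is_model_def is_struct_def)
  then have a: "from_nat_into (univ M) (k div 2) \<in> univ M"
    and b: "from_nat_into (univ N) (k div 2) \<in> univ N" by (simp_all add: from_nat_into)
  show ?case
  proof (cases "even k")
    case True
    let ?a = "from_nat_into (univ M) (k div 2)"
    have "\<exists>b. b \<in> univ N \<and> partial_elementary \<Gamma> M N (xs @ [?a]) (ys @ [b])"
      using partial_elementary_extend[OF A(1) M N xy a] by blast
    from someI_ex[OF this] show ?thesis using True by (simp add: k Let_def)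
  next
    case False
    let ?b = "from_nat_into (univ N) (k div 2)"
    have "\<exists>a. a \<in> univ M \<and> partial_elementary \<Gamma> M N (xs @ [a]) (ys @ [?b])"
      using partial_elementary_extend[OF A(1) N M partial_elementary_sym[OF xy] b]
      by (blast dest: partial_elementary_sym)
    from someI_ex[OF this] show ?thesis using False by (simp add: k Let_def)
  qed
qed

lemma elementary_enumerations:
  assumes A: "qf_determined \<Gamma> A" "univ A \<noteq> {}"
    and M: "is_model \<Gamma> (Th \<Gamma> A) M" "countable (univ M)"
    and N: "is_model \<Gamma> (Th \<Gamma> A) N" "countable (univ N)"
  obtains X Y where "range X = univ M" "range Y = univ N"
    "\<And>\<phi>. wf_fm \<Gamma> \<phi> \<Longrightarrow> sat M X \<phi> \<longleftrightarrow> sat N Y \<phi>"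
proof -
  let ?bf = "back_and_forth \<Gamma> M N"
  define X where "X i = fst (?bf (Suc i)) ! i" for i
  define Y where "Y i = snd (?bf (Suc i)) ! i" for i
  have bf: "?bf k = (map X [0..<k], map Y [0..<k])" for k
  proof (induction k)
    case (Suc k)
    then show ?case
      using length_back_and_forth[of \<Gamma> M N k] back_and_forth_Suc[of \<Gamma> M N k]
      by (auto simp: X_def Y_def nth_append)
  qed simp
  have elem: "partial_elementary \<Gamma> M N (map X [0..<k]) (map Y [0..<k])" for k
    using partial_elementary_back_and_forth[OF A M(1) N(1), of k] by (simp add: bf)
  have XY: "sat M X \<phi> \<longleftrightarrow> sat N Y \<phi>" if "wf_fm \<Gamma> \<phi>" for \<phi>
  proof -
    obtain k where k: "fv \<phi> \<subseteq> {..<k}" using finite_nat_bounded[OF finite_fv] by blast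
    have "sat M (tuple_asg M (map X [0..<k])) \<phi> \<longleftrightarrow> sat N (tuple_asg N (map Y [0..<k])) \<phi>"
      using elem[of k] that k by (simp add: partial_elementary_def)
    moreover have "sat M (tuple_asg M (map X [0..<k])) \<phi> \<longleftrightarrow> sat M X \<phi>"
      "sat N (tuple_asg N (map Y [0..<k])) \<phi> \<longleftrightarrow> sat N Y \<phi>"
      using k by (auto intro!: sat_agree simp: tuple_asg_def)
    ultimately show ?thesis by simp
  qed
  have "X i \<in> univ M" "Y i \<in> univ N" for i using elem[of "Suc i"] by (auto simp: partial_elementary_def)
  then have "range X \<subseteq> univ M" "range Y \<subseteq> univ N" by auto
  moreover have "from_nat_into (univ M) j \<in> range X" "from_nat_into (univ N) j \<in> range Y" for j
  proof -
    have "X (2 * j) = from_nat_into (univ M) j" "Y (Suc (2 * j)) = from_nat_into (univ N) j"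
      using length_back_and_forth[of \<Gamma> M N "2 * j"] length_back_and_forth[of \<Gamma> M N "Suc (2 * j)"]
      by (simp_all add: X_def Y_def Let_def split_beta nth_append)
    then show "from_nat_into (univ M) j \<in> range X" "from_nat_into (univ N) j \<in> range Y"
      by (auto intro: range_eqI[OF sym])
  qed
  ultimately have "range X = univ M" "range Y = univ N"
    using from_nat_into_surj[OF M(2)] from_nat_into_surj[OF N(2)] by (metis subsetI subset_antisym)+
  from this XY show thesis by (rule that)
qed

lemma L_iso_of_elementary_enumerations:
  assumes M: "is_struct M" and X: "range X = univ M" and Y: "range Y = univ N"
    and XY: "\<And>\<phi>. wf_fm \<Gamma> \<phi> \<Longrightarrow> sat M X \<phi> \<longleftrightarrow> sat N Y \<phi>"
  shows "L_iso \<Gamma> M N (\<lambda>x. Y (SOME i. X i = x))"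
proof -
  define f where "f x = Y (SOME i. X i = x)" for x
  have same: "X i = X j \<longleftrightarrow> Y i = Y j" for i j using XY[of "Eq (Var i) (Var j)"] by simp
  have fX: "f (X i) = Y i" for i
  proof -
    have "X (SOME j. X j = X i) = X i" by (rule someI[of "\<lambda>j. X j = X i" i]) (rule refl)
    then show ?thesis using same by (simp add: f_def)
  qed
  have index: "\<exists>k. X k = x" if "x \<in> univ M" for x using that unfolding X[symmetric] by auto
  have XM: "X i \<in> univ M" for i using X by auto
  have "inj_on f (univ M)"
  proof (rule inj_onI)
    fix x y assume "x \<in> univ M" "y \<in> univ M" "f x = f y"
    moreover obtain i j where "X i = x" "X j = y" using index \<open>x \<in> univ M\<close> \<open>y \<in> univ M\<close> by blast
    ultimately show "x = y" using fX same by auto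
  qed
  moreover have "f ` univ M = univ N" unfolding X[symmetric] Y[symmetric] by (simp add: image_image fX)
  moreover have "f (eps M) = eps N"
  proof -
    obtain k where k: "X k = eps M" using index[of "eps M"] M by (auto simp: is_struct_def)
    then have "Y k = eps N" using XY[of "Eq (Var k) Eps"] by simp
    then show ?thesis using fX[of k] k by simp
  qed
  moreover have "f (meet M (X i) (X j)) = meet N (Y i) (Y j)" for i j
  proof -
    obtain k where k: "X k = meet M (X i) (X j)"
      using index[of "meet M (X i) (X j)"] M XM by (auto simp: is_struct_def)
    then show ?thesis using XY[of "Eq (Meet (Var i) (Var j)) (Var k)"] fX by (simp flip: k)
  qed
  moreover have "f (prd M (X i)) = prd N (Y i)" for i
  proof -
    obtain k where k: "X k = prd M (X i)" using index[of "prd M (X i)"] M XM by (auto simp: is_struct_def)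
    then show ?thesis using XY[of "Eq (Pred (Var i)) (Var k)"] fX by (simp flip: k)
  qed
  moreover have "leq M (X i) (X j) \<longleftrightarrow> leq N (Y i) (Y j)" for i j using XY[of "Le (Var i) (Var j)"] by simp
  moreover have "pr M \<sigma> (X i) \<longleftrightarrow> pr N \<sigma> (Y i)" if "\<sigma> \<in> \<Gamma>" for \<sigma> i using XY[of "P \<sigma> (Var i)"] that by simp
  ultimately show ?thesis unfolding L_iso_def bij_betw_def f_def[symmetric] by (simp flip: X add: fX)
qed

theorem qf_determined_aleph0_categorical:
  assumes "qf_determined \<Gamma> A" "univ A \<noteq> {}"
  shows "aleph0_categorical \<Gamma> (Th \<Gamma> A) TYPE('a) TYPE('b)"
  unfolding aleph0_categorical_def
proof (intro allI impI, elim conjE)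
  fix M :: "'a lstruct" and N :: "'b lstruct"
  assume M: "is_model \<Gamma> (Th \<Gamma> A) M" "countable (univ M)"
    and N: "is_model \<Gamma> (Th \<Gamma> A) N" "countable (univ N)"
  obtain X Y where "range X = univ M" "range Y = univ N"
    "\<And>\<phi>. wf_fm \<Gamma> \<phi> \<Longrightarrow> sat M X \<phi> \<longleftrightarrow> sat N Y \<phi>"
    using elementary_enumerations[OF assms M N] by blast
  moreover have "is_struct M" using M(1) by (simp add: is_model_def)
  ultimately show "\<exists>f. L_iso \<Gamma> M N f" using L_iso_of_elementary_enumerations by blast
qed

section \<open>The tree \<open>\<Gamma>(\<omega>)\<close> and its automorphisms\<close>

lemma prefix_iff_take: "prefix x y \<longleftrightarrow> x = take (length x) y"
  by (metis append_eq_conv_conj prefix_def take_is_prefix)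

lemma butlast_funpow: "(butlast ^^ k) x = take (length x - k) x"
  by (induction k) (auto simp: butlast_take)

lemma take_in_treeplan_dom:
  assumes "tree_plan \<Gamma> lam" "s \<in> treeplan_dom \<Gamma> lam"
  shows "take k s \<in> treeplan_dom \<Gamma> lam"
proof -
  have "map fst (take k s) \<in> \<Gamma>" using assms by (auto simp: tree_plan_def treeplan_dom_def take_map)
  then show ?thesis using assms(2) by (auto simp: treeplan_dom_def take_map min_def)
qed

lemma prefix_in_treeplan_dom:
  "tree_plan \<Gamma> lam \<Longrightarrow> prefix p s \<Longrightarrow> s \<in> treeplan_dom \<Gamma> lam \<Longrightarrow> p \<in> treeplan_dom \<Gamma> lam"
  by (metis prefix_iff_take take_in_treeplan_dom)

lemma Nil_in_treeplan_dom: "tree_plan \<Gamma> lam \<Longrightarrow> [] \<in> treeplan_dom \<Gamma> lam"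
  by (simp add: tree_plan_def treeplan_dom_def)

lemma snoc_in_treeplan_dom_label:
  assumes "q @ [(i, t)] \<in> treeplan_dom \<Gamma> lam"
  shows "t = None \<longleftrightarrow> lam (map fst q @ [i]) = One"
proof -
  have "\<forall>k<Suc (length q). lam (take (Suc k) (map fst q @ [i])) = One \<longleftrightarrow> snd ((q @ [(i, t)]) ! k) = None"
    using assms by (simp add: treeplan_dom_def)
  from this[rule_format, of "length q"] show ?thesis by simp
qed

definition plan_height :: "nat list set \<Rightarrow> nat" where
  "plan_height \<Gamma> = Max (length ` \<Gamma>)"

lemma length_le_plan_height:
  assumes "tree_plan \<Gamma> lam" "s \<in> treeplan_dom \<Gamma> lam"
  shows "length s \<le> plan_height \<Gamma>"
proof -
  have "length (map fst s) \<le> Max (length ` \<Gamma>)"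
    using assms by (intro Max_ge) (auto simp: tree_plan_def treeplan_dom_def simp del: length_map)
  then show ?thesis by (simp add: plan_height_def)
qed

lemma is_struct_treeplan_struct: "tree_plan \<Gamma> lam \<Longrightarrow> is_struct (treeplan_struct \<Gamma> lam)"
  using Nil_in_treeplan_dom[of \<Gamma> lam]
  by (auto simp: is_struct_def treeplan_struct_def butlast_conv_take take_in_treeplan_dom
      intro: prefix_in_treeplan_dom longest_common_prefix_prefix1)

definition gmap :: "(elt \<Rightarrow> nat \<Rightarrow> nat option \<Rightarrow> nat option) \<Rightarrow> elt \<Rightarrow> elt" where
  "gmap \<rho> s = map (\<lambda>k. (fst (s ! k), \<rho> (take k s) (fst (s ! k)) (snd (s ! k)))) [0..<length s]"

text \<open>\<open>None\<close> encodes \<open>\<star>\<close>, so fixing it keeps \<open>gmap \<rho>\<close> inside \<open>\<Gamma>(\<omega>)\<close>.\<close>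
definition local_perms :: "(elt \<Rightarrow> nat \<Rightarrow> nat option \<Rightarrow> nat option) \<Rightarrow> bool" where
  "local_perms \<rho> \<longleftrightarrow> (\<forall>p i. bij (\<rho> p i) \<and> \<rho> p i None = None)"

lemma length_gmap [simp]: "length (gmap \<rho> s) = length s"
  by (simp add: gmap_def)

lemma nth_gmap: "k < length s \<Longrightarrow> gmap \<rho> s ! k = (fst (s ! k), \<rho> (take k s) (fst (s ! k)) (snd (s ! k)))"
  by (simp add: gmap_def)

lemma map_fst_gmap [simp]: "map fst (gmap \<rho> s) = map fst s"
  by (rule nth_equalityI) (auto simp: nth_gmap)

lemma take_gmap: "take k (gmap \<rho> s) = gmap \<rho> (take k s)"
proof (rule nth_equalityI)
  fix i assume "i < length (take k (gmap \<rho> s))"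
  then have "i < k" "i < length s" by auto
  then show "take k (gmap \<rho> s) ! i = gmap \<rho> (take k s) ! i" by (simp add: nth_gmap min_def)
qed simp

lemma gmap_Nil [simp]: "gmap \<rho> [] = []"
  by (simp add: gmap_def)

lemma gmap_snoc: "gmap \<rho> (s @ [(i, t)]) = gmap \<rho> s @ [(i, \<rho> s i t)]"
  by (rule nth_equalityI) (auto simp: nth_gmap nth_append)

lemma inj_gmap:
  assumes "\<And>p i. inj (\<rho> p i)"
  shows "inj (gmap \<rho>)"
proof -
  have "gmap \<rho> s = gmap \<rho> s' \<longrightarrow> s = s'" for s s'
  proof (induction s arbitrary: s' rule: rev_induct)
    case Nil
    then show ?case by (metis gmap_Nil length_0_conv length_gmap)
  next
    case (snoc a s)
    show ?case
    proof
      assume eq: "gmap \<rho> (s @ [a]) = gmap \<rho> s'"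
      then have "s' \<noteq> []" by (metis length_gmap length_0_conv snoc_eq_iff_butlast)
      then obtain s0 i' t' where s': "s' = s0 @ [(i', t')]" by (metis prod.exhaust rev_exhaust)
      obtain i t where a: "a = (i, t)" by fastforce
      from eq have "gmap \<rho> s = gmap \<rho> s0" "i = i'" "\<rho> s i t = \<rho> s0 i' t'"
        by (auto simp: a s' gmap_snoc)
      moreover from this(1) have "s = s0" using snoc.IH by blast
      ultimately show "s @ [a] = s'" using assms by (auto simp: a s' dest: injD)
    qed
  qed
  then show ?thesis by (auto intro: injI)
qed

lemma surj_gmap:
  assumes "\<And>p i. surj (\<rho> p i)"
  shows "surj (gmap \<rho>)"
proof -
  have "y \<in> range (gmap \<rho>)" for y
  proof (induction y rule: rev_induct)
    case (snoc a y)
    then obtain x where x: "gmap \<rho> x = y" by blast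
    obtain i t where a: "a = (i, t)" by fastforce
    obtain t0 where "\<rho> x i t0 = t" using assms by (metis surjD)
    then have "gmap \<rho> (x @ [(i, t0)]) = y @ [a]" by (simp add: x a gmap_snoc)
    then show ?case by (metis rangeI)
  qed (metis gmap_Nil rangeI)
  then show ?thesis by auto
qed

lemma prefix_gmap_iff: "inj (gmap \<rho>) \<Longrightarrow> prefix (gmap \<rho> x) (gmap \<rho> y) \<longleftrightarrow> prefix x y"
  unfolding prefix_iff_take by (simp add: take_gmap inj_eq)

lemma gmap_butlast: "gmap \<rho> (butlast x) = butlast (gmap \<rho> x)"
  by (simp add: butlast_conv_take take_gmap)

lemma gmap_longest_common_prefix:
  assumes inj: "inj (gmap \<rho>)" and surj: "surj (gmap \<rho>)"
  shows "gmap \<rho> (longest_common_prefix x y) = longest_common_prefix (gmap \<rho> x) (gmap \<rho> y)"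
proof (rule prefix_order.antisym)
  show "prefix (gmap \<rho> (longest_common_prefix x y)) (longest_common_prefix (gmap \<rho> x) (gmap \<rho> y))"
    by (intro longest_common_prefix_max_prefix)
      (simp_all add: prefix_gmap_iff[OF inj] longest_common_prefix_prefix1 longest_common_prefix_prefix2)
  obtain z where z: "gmap \<rho> z = longest_common_prefix (gmap \<rho> x) (gmap \<rho> y)" using surj by (metis surjD)
  have "prefix z x" "prefix z y"
    using longest_common_prefix_prefix1 longest_common_prefix_prefix2 by (metis prefix_gmap_iff[OF inj] z)+
  then have "prefix z (longest_common_prefix x y)" by (rule longest_common_prefix_max_prefix)
  then show "prefix (longest_common_prefix (gmap \<rho> x) (gmap \<rho> y)) (gmap \<rho> (longest_common_prefix x y))"
    by (simp add: prefix_gmap_iff[OF inj] flip: z)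
qed

lemma L_iso_gmap:
  assumes tp: "tree_plan \<Gamma> lam" and \<rho>: "local_perms \<rho>"
  shows "L_iso \<Gamma> (treeplan_struct \<Gamma> lam) (treeplan_struct \<Gamma> lam) (gmap \<rho>)"
proof -
  have inj: "inj (gmap \<rho>)" and surj: "surj (gmap \<rho>)"
    using \<rho> by (auto simp: local_perms_def bij_def intro!: inj_gmap surj_gmap)
  have "\<rho> p i t = None \<longleftrightarrow> t = None" for p i t
    using \<rho> by (metis bij_def injD local_perms_def)
  then have dom: "gmap \<rho> x \<in> treeplan_dom \<Gamma> lam \<longleftrightarrow> x \<in> treeplan_dom \<Gamma> lam" for x
    by (simp add: treeplan_dom_def nth_gmap)
  have "gmap \<rho> ` treeplan_dom \<Gamma> lam = treeplan_dom \<Gamma> lam"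
    using dom surj by (auto simp: image_iff) (metis surjD)
  then have "bij_betw (gmap \<rho>) (treeplan_dom \<Gamma> lam) (treeplan_dom \<Gamma> lam)"
    using inj by (simp add: bij_betw_def inj_def inj_on_def)
  then show ?thesis
    by (simp add: L_iso_def treeplan_struct_def gmap_longest_common_prefix[OF inj surj] gmap_butlast
        prefix_gmap_iff[OF inj])
qed

section \<open>Extending finite partial isomorphisms\<close>

lemma finite_inj_on_extends_to_bij:
  fixes m :: "'a \<Rightarrow> 'a"
  assumes fin: "finite F" and inj: "inj_on m F"
  shows "\<exists>r. bij r \<and> (\<forall>x\<in>F. r x = m x)"
proof -
  let ?A = "F \<union> m ` F"
  have "card (?A - F) = card (?A - m ` F)"
    using fin inj by (simp add: card_Diff_subset card_image)
  then obtain g where g: "bij_betw g (?A - F) (?A - m ` F)"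
    using fin finite_same_card_bij by (metis finite_Diff finite_Un finite_imageI)
  define r where "r x = (if x \<in> F then m x else if x \<in> ?A then g x else x)" for x
  have "bij_betw r F (m ` F)"
    using inj by (simp add: bij_betw_def inj_on_def image_def r_def)
  moreover have "bij_betw r (?A - F) (?A - m ` F)"
    using g by (rule bij_betw_cong[THEN iffD1, rotated]) (auto simp: r_def)
  moreover have "bij_betw r (- ?A) (- ?A)"
    using bij_betw_id by (rule bij_betw_cong[THEN iffD1, rotated]) (simp add: r_def)
  ultimately have "bij_betw r (F \<union> (?A - F) \<union> - ?A) (m ` F \<union> (?A - m ` F) \<union> - ?A)"
    by (intro bij_betw_combine) auto
  moreover have "F \<union> (?A - F) \<union> - ?A = UNIV" "m ` F \<union> (?A - m ` F) \<union> - ?A = UNIV" by auto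
  ultimately show ?thesis by (auto simp: r_def)
qed

lemma finite_inj_on_extends_to_bij_fixing:
  assumes "finite F" "inj_on m F" "\<forall>x\<in>F. m x = a \<longleftrightarrow> x = a"
  shows "\<exists>r. bij r \<and> r a = a \<and> (\<forall>x\<in>F. r x = m x)"
proof -
  have "inj_on (m(a := a)) (insert a F)"
    using assms(2,3) by (auto simp: inj_on_def)
  then obtain r where "bij r" "\<forall>x\<in>insert a F. r x = (m(a := a)) x"
    using finite_inj_on_extends_to_bij assms(1) by (metis finite_insert)
  then show ?thesis using assms(3) by (metis fun_upd_apply insert_iff)
qed

locale tree_partial_iso =
  fixes \<Gamma> :: "nat list set" and lam :: "nat list \<Rightarrow> lab" and S :: "elt set" and f :: "elt \<Rightarrow> elt"
  assumes finite_S: "finite S"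
    and S_treeplan_dom: "S \<subseteq> treeplan_dom \<Gamma> lam"
    and take_closed: "x \<in> S \<Longrightarrow> take k x \<in> S"
    and inj_on_f: "inj_on f S"
    and f_treeplan_dom: "x \<in> S \<Longrightarrow> f x \<in> treeplan_dom \<Gamma> lam"
    and map_fst_f: "x \<in> S \<Longrightarrow> map fst (f x) = map fst x"
    and f_take: "x \<in> S \<Longrightarrow> f (take k x) = take k (f x)"
begin

definition label :: "elt \<Rightarrow> nat \<Rightarrow> nat option \<Rightarrow> nat option" where
  "label p i t = snd (f (p @ [(i, t)]) ! length p)"

lemma f_snoc:
  assumes x: "p @ [(i, t)] \<in> S"
  shows "f (p @ [(i, t)]) = f p @ [(i, label p i t)]"
proof -
  let ?y = "f (p @ [(i, t)])"
  have fst: "map fst ?y = map fst p @ [i]" using map_fst_f[OF x] by simp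
  then have len: "length ?y = Suc (length p)" by (metis length_append_singleton length_map)
  have "fst (?y ! length p) = i" using arg_cong[OF fst, of "\<lambda>l. l ! length p"] len by (simp add: nth_append)
  then have "?y ! length p = (i, label p i t)" by (simp add: label_def prod_eq_iff)
  moreover have "f p = take (length p) ?y" using f_take[OF x, of "length p"] by simp
  ultimately show ?thesis using len take_Suc_conv_app_nth[of "length p" ?y] by simp
qed

lemma inj_on_label: "inj_on (label p i) {t. p @ [(i, t)] \<in> S}"
proof (rule inj_onI)
  fix t t' assume S: "t \<in> {t. p @ [(i, t)] \<in> S}" "t' \<in> {t. p @ [(i, t)] \<in> S}"
    and "label p i t = label p i t'"
  then have "f (p @ [(i, t)]) = f (p @ [(i, t')])" by (simp add: f_snoc)
  then show "t = t'" using inj_on_f S by (auto dest: inj_onD)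
qed

lemma label_eq_None_iff:
  assumes x: "p @ [(i, t)] \<in> S"
  shows "label p i t = None \<longleftrightarrow> t = None"
proof -
  have p: "p \<in> S" using take_closed[OF x, of "length p"] by simp
  have "p @ [(i, t)] \<in> treeplan_dom \<Gamma> lam" using S_treeplan_dom x by blast
  then have "t = None \<longleftrightarrow> lam (map fst p @ [i]) = One" by (rule snoc_in_treeplan_dom_label)
  moreover have "f p @ [(i, label p i t)] \<in> treeplan_dom \<Gamma> lam" using f_treeplan_dom[OF x] by (simp add: f_snoc[OF x])
  then have "label p i t = None \<longleftrightarrow> lam (map fst (f p) @ [i]) = One" by (rule snoc_in_treeplan_dom_label)
  ultimately show ?thesis using map_fst_f[OF p] by simp
qed

theorem ex_local_perms_extension: "\<exists>\<rho>. local_perms \<rho> \<and> (\<forall>x\<in>S. gmap \<rho> x = f x)"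
proof -
  have ex: "\<exists>r. bij r \<and> r None = None \<and> (\<forall>t\<in>{t. p @ [(i, t)] \<in> S}. r t = label p i t)" for p i
  proof (rule finite_inj_on_extends_to_bij_fixing)
    have "inj (\<lambda>t. p @ [(i, t)])" by (auto intro: injI)
    then show "finite {t. p @ [(i, t)] \<in> S}" using finite_vimageI[OF finite_S] by (simp add: vimage_def)
    show "inj_on (label p i) {t. p @ [(i, t)] \<in> S}" by (rule inj_on_label)
    show "\<forall>t\<in>{t. p @ [(i, t)] \<in> S}. label p i t = None \<longleftrightarrow> t = None"
      by (simp add: label_eq_None_iff)
  qed
  define \<rho> where "\<rho> p i = (SOME r. bij r \<and> r None = None \<and> (\<forall>t\<in>{t. p @ [(i, t)] \<in> S}. r t = label p i t))"
    for p i
  have \<rho>: "bij (\<rho> p i) \<and> \<rho> p i None = None \<and> (\<forall>t\<in>{t. p @ [(i, t)] \<in> S}. \<rho> p i t = label p i t)"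
    for p i
    unfolding \<rho>_def by (rule someI_ex[OF ex])
  have "x \<in> S \<longrightarrow> gmap \<rho> x = f x" for x
  proof (induction x rule: rev_induct)
    case Nil
    then show ?case using map_fst_f[of "[]"] by simp
  next
    case (snoc a x)
    obtain i t where a: "a = (i, t)" by fastforce
    show ?case
    proof
      assume S: "x @ [a] \<in> S"
      then have "x \<in> S" using take_closed[OF S, of "length x"] by simp
      then show "gmap \<rho> (x @ [a]) = f (x @ [a])" using snoc.IH S \<rho> by (simp add: a gmap_snoc f_snoc)
    qed
  qed
  then show ?thesis using \<rho> by (auto simp: local_perms_def)
qed

end

text \<open>The choice of \<open>v\<close> is irrelevant under the hypothesis of \<open>transport_eq\<close>.\<close>
definition transport :: "nat set \<Rightarrow> (nat \<Rightarrow> elt) \<Rightarrow> (nat \<Rightarrow> elt) \<Rightarrow> elt \<Rightarrow> elt" where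
  "transport V X Y p = take (length p) (Y (SOME v. v \<in> V \<and> prefix p (X v)))"

lemma transport_eq:
  assumes take: "\<And>v w k. v \<in> V \<Longrightarrow> w \<in> V \<Longrightarrow> take k (X v) = take k (X w) \<longleftrightarrow> take k (Y v) = take k (Y w)"
    and v: "v \<in> V" "prefix p (X v)"
  shows "transport V X Y p = take (length p) (Y v)"
proof -
  define w where "w = (SOME v. v \<in> V \<and> prefix p (X v))"
  have w: "w \<in> V" "prefix p (X w)"
    using someI[of "\<lambda>v. v \<in> V \<and> prefix p (X v)" v] v by (simp_all add: w_def)
  then have "take (length p) (X v) = take (length p) (X w)" using v(2) by (metis prefix_iff_take)
  then show ?thesis using take[OF v(1) w(1)] by (simp add: transport_def flip: w_def)
qed

lemma tree_partial_iso_transport: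
  fixes V :: "nat set"
  assumes tp: "tree_plan \<Gamma> lam" and V: "finite V"
    and dom: "\<And>v. v \<in> V \<Longrightarrow> X v \<in> treeplan_dom \<Gamma> lam" "\<And>v. v \<in> V \<Longrightarrow> Y v \<in> treeplan_dom \<Gamma> lam"
    and fst: "\<And>v. v \<in> V \<Longrightarrow> map fst (X v) = map fst (Y v)"
    and take: "\<And>v w k. v \<in> V \<Longrightarrow> w \<in> V \<Longrightarrow> take k (X v) = take k (X w) \<longleftrightarrow> take k (Y v) = take k (Y w)"
  shows "tree_partial_iso \<Gamma> lam {p. \<exists>v\<in>V. prefix p (X v)} (transport V X Y)"
proof
  let ?S = "{p. \<exists>v\<in>V. prefix p (X v)}" and ?f = "transport V X Y"
  have len: "length (Y v) = length (X v)" if "v \<in> V" for v using fst[OF that] by (metis length_map)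
  have f: "?f p = take (length p) (Y v)" "length p \<le> length (X v)" if "v \<in> V" "prefix p (X v)" for p v
    using transport_eq[where V = V and X = X and Y = Y, OF take that] prefix_length_le[OF that(2)]
    by simp_all
  have "?S \<subseteq> (\<Union>v\<in>V. set (prefixes (X v)))" by auto
  then show "finite ?S" using V by (auto intro: finite_subset)
  show "?S \<subseteq> treeplan_dom \<Gamma> lam" using dom(1) prefix_in_treeplan_dom[OF tp] by blast
  show "take k x \<in> ?S" if "x \<in> ?S" for x k using that take_is_prefix prefix_order.trans by blast
  show "inj_on ?f ?S"
  proof (rule inj_onI)
    fix p q assume "p \<in> ?S" "q \<in> ?S" and eq: "?f p = ?f q"
    then obtain v w where v: "v \<in> V" "prefix p (X v)" and w: "w \<in> V" "prefix q (X w)" by blast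
    have "length (?f p) = length p" "length (?f q) = length q" using f[OF v] f[OF w] len v w by auto
    then have pq: "length p = length q" using eq by simp
    then have "take (length p) (Y v) = take (length p) (Y w)" using eq f[OF v] f[OF w] by simp
    then have "take (length p) (X v) = take (length p) (X w)" using take[OF v(1) w(1)] by simp
    then show "p = q" using v(2) w(2) pq by (simp add: prefix_iff_take)
  qed
  show "?f p \<in> treeplan_dom \<Gamma> lam" if "p \<in> ?S" for p
    using that f dom(2) take_in_treeplan_dom[OF tp] by auto
  show "map fst (?f p) = map fst p" if p: "p \<in> ?S" for p
  proof -
    obtain v where v: "v \<in> V" "prefix p (X v)" using p by blast
    then have "map fst (?f p) = take (length p) (map fst (X v))" by (simp add: f take_map fst)
    also have "\<dots> = map fst p" using v(2) by (metis prefix_iff_take take_map)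
    finally show ?thesis .
  qed
  show "?f (take k p) = take k (?f p)" if p: "p \<in> ?S" for p k
  proof -
    obtain v where v: "v \<in> V" "prefix p (X v)" using p by blast
    moreover have "prefix (take k p) (X v)" using v(2) by (auto intro: prefix_order.trans take_is_prefix)
    ultimately show ?thesis using f by (simp add: min.commute)
  qed
qed

lemma ex_local_perms_mapping_family:
  fixes V :: "nat set"
  assumes tp: "tree_plan \<Gamma> lam" and V: "finite V"
    and dom: "\<And>v. v \<in> V \<Longrightarrow> X v \<in> treeplan_dom \<Gamma> lam" "\<And>v. v \<in> V \<Longrightarrow> Y v \<in> treeplan_dom \<Gamma> lam"
    and fst: "\<And>v. v \<in> V \<Longrightarrow> map fst (X v) = map fst (Y v)"
    and take: "\<And>v w k. v \<in> V \<Longrightarrow> w \<in> V \<Longrightarrow> take k (X v) = take k (X w) \<longleftrightarrow> take k (Y v) = take k (Y w)"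
  shows "\<exists>\<rho>. local_perms \<rho> \<and> (\<forall>v\<in>V. gmap \<rho> (X v) = Y v)"
proof -
  obtain \<rho> where \<rho>: "local_perms \<rho>" "\<forall>x\<in>{p. \<exists>v\<in>V. prefix p (X v)}. gmap \<rho> x = transport V X Y x"
    using tree_partial_iso.ex_local_perms_extension[OF
        tree_partial_iso_transport[where X = X and Y = Y, OF tp V dom fst take]] by blast
  have "gmap \<rho> (X v) = Y v" if "v \<in> V" for v
  proof -
    have "gmap \<rho> (X v) = transport V X Y (X v)" using \<rho>(2) that by blast
    also have "\<dots> = take (length (X v)) (Y v)"
      using transport_eq[where V = V and X = X and Y = Y, OF take that prefix_order.refl] .
    also have "\<dots> = Y v" using fst[OF that] by (metis length_map order_refl take_all)
    finally show ?thesis .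
  qed
  then show ?thesis using \<rho>(1) by blast
qed

section \<open>Atomic diagrams in \<open>\<Gamma>(\<omega>)\<close>\<close>

definition tree_atoms :: "nat list set \<Rightarrow> nat set \<Rightarrow> fm set" where
  "tree_atoms \<Gamma> V =
     (\<lambda>(v, w, k, j). Eq ((Pred ^^ k) (Var v)) ((Pred ^^ j) (Var w))) `
       (V \<times> V \<times> {..plan_height \<Gamma>} \<times> {..plan_height \<Gamma>})
     \<union> (\<lambda>(\<sigma>, v). P \<sigma> (Var v)) ` (\<Gamma> \<times> V)"

lemma tval_funpow_Pred: "tval M e ((Pred ^^ k) t) = (prd M ^^ k) (tval M e t)"
  by (induction k) auto

lemma tvars_funpow_Pred: "tvars ((Pred ^^ k) t) = tvars t"
  by (induction k) auto

lemma butlast_funpow_length_diff: "(butlast ^^ (length x - k)) x = take k x"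
  by (cases "k \<le> length x") (simp_all add: butlast_funpow)

lemma ex_local_perms_of_tree_atoms:
  assumes tp: "tree_plan \<Gamma> lam" and V: "finite V"
    and e: "assignment (treeplan_struct \<Gamma> lam) e" and e': "assignment (treeplan_struct \<Gamma> lam) e'"
    and agree: "\<And>\<alpha>. \<alpha> \<in> tree_atoms \<Gamma> V \<Longrightarrow>
      sat (treeplan_struct \<Gamma> lam) e \<alpha> \<longleftrightarrow> sat (treeplan_struct \<Gamma> lam) e' \<alpha>"
  shows "\<exists>\<rho>. local_perms \<rho> \<and> (\<forall>v\<in>V. gmap \<rho> (e v) = e' v)"
proof (rule ex_local_perms_mapping_family[OF tp V])
  show dom: "e v \<in> treeplan_dom \<Gamma> lam" "e' v \<in> treeplan_dom \<Gamma> lam" for v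
    using e e' by (auto simp: assignment_def treeplan_struct_def)
  show fst: "map fst (e v) = map fst (e' v)" if "v \<in> V" for v
  proof -
    have "map fst (e v) \<in> \<Gamma>" using dom(1) by (simp add: treeplan_dom_def)
    then have "P (map fst (e v)) (Var v) \<in> tree_atoms \<Gamma> V" using that by (auto simp: tree_atoms_def)
    then show ?thesis using agree by (fastforce simp: treeplan_struct_def)
  qed
  show "take k (e v) = take k (e w) \<longleftrightarrow> take k (e' v) = take k (e' w)" if "v \<in> V" "w \<in> V" for v w k
  proof -
    let ?\<alpha> = "Eq ((Pred ^^ (length (e v) - k)) (Var v)) ((Pred ^^ (length (e w) - k)) (Var w))"
    have "length (e v) \<le> plan_height \<Gamma>" "length (e w) \<le> plan_height \<Gamma>"
      using length_le_plan_height[OF tp dom(1)] by auto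
    then have "?\<alpha> \<in> tree_atoms \<Gamma> V" using that unfolding tree_atoms_def
      by (intro UnI1 image_eqI[where x = "(v, w, length (e v) - k, length (e w) - k)"]) auto
    moreover have "length (e' v) = length (e v)" "length (e' w) = length (e w)"
      using fst that by (metis length_map)+
    then have "(butlast ^^ (length (e v) - k)) (e' v) = take k (e' v)"
      "(butlast ^^ (length (e w) - k)) (e' w) = take k (e' w)"
      by (metis butlast_funpow_length_diff)+
    ultimately show ?thesis
      using agree[of ?\<alpha>] by (simp add: treeplan_struct_def tval_funpow_Pred butlast_funpow_length_diff)
  qed
qed

theorem qf_determined_treeplan_struct:
  assumes tp: "tree_plan \<Gamma> lam"
  shows "qf_determined \<Gamma> (treeplan_struct \<Gamma> lam)"
  unfolding qf_determined_def
proof (intro allI impI)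
  fix V :: "nat set" assume V: "finite V"
  let ?A = "treeplan_struct \<Gamma> lam"
  have "finite (tree_atoms \<Gamma> V)" using tp V by (simp add: tree_atoms_def tree_plan_def)
  then obtain L where L: "set L = tree_atoms \<Gamma> V" using finite_list by blast
  have "qf_determines \<Gamma> ?A V L"
    unfolding qf_determines_def
  proof (intro conjI allI impI)
    show "\<forall>\<alpha>\<in>set L. wf_fm \<Gamma> \<alpha> \<and> qfree \<alpha> \<and> fv \<alpha> \<subseteq> V"
      by (auto simp: L tree_atoms_def tvars_funpow_Pred)
    fix e e' \<phi>
    assume e: "assignment ?A e" and e': "assignment ?A e'"
      and agree: "\<forall>\<alpha>\<in>set L. sat ?A e \<alpha> \<longleftrightarrow> sat ?A e' \<alpha>"
      and \<phi>: "wf_fm \<Gamma> \<phi>" "fv \<phi> \<subseteq> V"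
    obtain \<rho> where \<rho>: "local_perms \<rho>" "\<forall>v\<in>V. gmap \<rho> (e v) = e' v"
      using ex_local_perms_of_tree_atoms[OF tp V e e'] agree by (auto simp: L)
    have "sat ?A e \<phi> \<longleftrightarrow> sat ?A (gmap \<rho> \<circ> e) \<phi>"
      by (rule L_iso_sat[OF is_struct_treeplan_struct[OF tp] L_iso_gmap[OF tp \<rho>(1)] e \<phi>(1), symmetric])
    also have "\<dots> \<longleftrightarrow> sat ?A e' \<phi>" using \<rho>(2) \<phi>(2) by (intro sat_agree) auto
    finally show "sat ?A e \<phi> \<longleftrightarrow> sat ?A e' \<phi>" .
  qed
  then show "\<exists>L. qf_determines \<Gamma> ?A V L" by blast
qed

theorem mainTheorem4:
  fixes \<Gamma> :: "nat list set" and lam :: "nat list \<Rightarrow> lab"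
  assumes "tree_plan \<Gamma> lam"
  shows "aleph0_categorical \<Gamma> (Th \<Gamma> (treeplan_struct \<Gamma> lam)) TYPE('a) TYPE('b)
         \<and> has_QE_Th \<Gamma> (treeplan_struct \<Gamma> lam)"
proof -
  have "qf_determined \<Gamma> (treeplan_struct \<Gamma> lam)" using assms by (rule qf_determined_treeplan_struct)
  moreover have "univ (treeplan_struct \<Gamma> lam) \<noteq> {}"
    using Nil_in_treeplan_dom[OF assms] by (auto simp: treeplan_struct_def)
  ultimately show ?thesis using qf_determined_aleph0_categorical qf_determined_has_QE_Th by blast
qed

end
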